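(* Let $\Delta\in\mathbb F^{m\times m}$ be a connection matrix with column/row partition $J_0,\dots,J_b$. Let $\widetilde\Delta^{m-1}$ be the last matrix produced by the Row Cancellation Algorithm (RCA) applied to $\Delta$, and let $\widetilde\Delta(1)^{m-1},\dots,\widetilde\Delta(b)^{m-1}$ be the matrices produced by the Block Sequential Row Cancellation Algorithm applied to $\Delta$. Then $\widetilde\Delta^{m-1}_{J_{k-1}J_k}=\widetilde\Delta(k)^{m-1}_{J_{k-1}J_k}$ for $k=1,\dots,b$, and the set of positions marked as primary pivots in the RCA run on $\Delta$ equals the union over $k$ of the sets of positions marked as primary pivots in the RCA runs on $\widetilde\Delta(k)$.
   Context: Throughout, $\mathbb F$ is a field and $m\ge1$. $A_{IJ}$ is the submatrix of $A$ with rows in $I$ and columns in $J$. $U^{pq}$ is the $m\times m$ matrix whose only nonzero entry is a $1$ in position $(p,q)$. Superscripts on matrices are indices, not powers. A connection matrix (over $\mathbb F$) is a matrix $\Delta\in\mathbb F^{m\times m}$ together with a partition $\{1,\dots,m\}=J_0\sqcup\cdots\sqcup J_b$ (the column/row partition; the $J_k$ need not consist of consecutive integers) such that $\Delta$ is upper triangular, $\Delta\Delta=0$, and $\Delta_{ij}=0$ unless $i<j$ and $(i,j)\in\bigcup_{k=1}^bJ_{k-1}\times J_k$. For $1\le r\le m-1$ the $r$-th diagonal is $\{(j-r,j):r<j\le m\}$. Row Cancellation Algorithm (RCA) applied to a connection matrix $\Delta$: set $\widetilde\Delta^0=\widetilde\Delta^1=\Delta$. For $r=1,\dots,m-1$ in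 turn: (Markup) mark permanently as a primary pivot every position $(j-r,j)$ on the $r$-th diagonal with $\widetilde\Delta^r_{j-r,j}\ne0$ such that no position of column $j$ was marked as a primary pivot at an earlier iteration. (Update, only for $r\le m-2$) If no position was marked at iteration $r$, put $\widetilde T^r=I$; otherwise let $j_1<\cdots<j_t$ be the columns of the positions marked at iteration $r$, let $\widetilde T^{r,s}=I-\sum_{q=j_s+1}^m\frac{\widetilde\Delta^r_{j_s-r,q}}{\widetilde\Delta^r_{j_s-r,j_s}}U^{j_sq}$ and $\widetilde T^r=\widetilde T^{r,1}\cdots\widetilde T^{r,t}$. Set $\widetilde\Delta^{r+1}=(\widetilde T^r)^{-1}\widetilde\Delta^r\widetilde T^r$. Block Sequential Row Cancellation Algorithm applied to $\Delta$: set $\widetilde{\mathcal J}_0=\emptyset$. For $k=1,\dots,b$ in turn: let $\widetilde\Delta(k)$ be the matrix that agrees with $\Delta$ at the positions in $(J_{k-1}\setminus\widetilde{\mathcal J}_{k-1})\times J_k$ and is zero elsewhere (a connection matrix with the same partition); apply RCA to $\widetilde\Delta(k)$, obtaining $\widetilde\Delta(k)^0,\dots,\widetilde\Delta(k)^{m-1}$; let $\widetilde{\mathcal J}_k$ be the set of indices of columns containing primary pivot positions in this run. *)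

theory Defs
  imports "Jordan_Normal_Form.Matrix"
begin

(* Conventions: indices are 0-based, i.e. the paper's index i corresponds to i-1 here;
   matrices are JNF matrices of dimension m x m. *)

definition is_partition :: "nat \<Rightarrow> nat \<Rightarrow> (nat \<Rightarrow> nat set) \<Rightarrow> bool" where
  "is_partition m b J \<longleftrightarrow>
     (\<Union>k\<in>{0..b}. J k) = {..<m} \<and>
     (\<forall>k\<in>{0..b}. \<forall>k'\<in>{0..b}. k \<noteq> k' \<longrightarrow> J k \<inter> J k' = {})"

definition connection_matrix :: "nat \<Rightarrow> nat \<Rightarrow> (nat \<Rightarrow> nat set) \<Rightarrow> 'a::field mat \<Rightarrow> bool" where
  "connection_matrix m b J D \<longleftrightarrow>
     D \<in> carrier_mat m m \<and> is_partition m b J \<and>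
     upper_triangular D \<and> D * D = 0\<^sub>m m m \<and>
     (\<forall>i<m. \<forall>j<m. D $$ (i,j) \<noteq> 0 \<longrightarrow>
        i < j \<and> (\<exists>k\<in>{1..b}. i \<in> J (k-1) \<and> j \<in> J k))"

definition mat_inv :: "nat \<Rightarrow> 'a::field mat \<Rightarrow> 'a mat" where
  "mat_inv m T = (SOME B. B \<in> carrier_mat m m \<and> T * B = 1\<^sub>m m \<and> B * T = 1\<^sub>m m)"

(* positions marked as primary pivots at iteration r, given current matrix D and
   previously marked positions P *)
definition new_pivots :: "nat \<Rightarrow> 'a::field mat \<Rightarrow> (nat \<times> nat) set \<Rightarrow> nat \<Rightarrow> (nat \<times> nat) set" where
  "new_pivots m D P r = {(j - r, j) | j. r \<le> j \<and> j < m \<and> D $$ (j - r, j) \<noteq> 0 \<and>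
                                         (\<forall>i. (i, j) \<notin> P)}"

(* T^{r,s} = I - sum_{q=j_s+1}^{m} (D_{j_s-r,q}/D_{j_s-r,j_s}) U^{j_s q}, written entrywise *)
definition T_elem :: "nat \<Rightarrow> 'a::field mat \<Rightarrow> nat \<Rightarrow> nat \<Rightarrow> 'a mat" where
  "T_elem m D r js = mat m m (\<lambda>(p,q). (if p = q then 1 else 0) -
       (if p = js \<and> js < q then D $$ (js - r, q) / D $$ (js - r, js) else 0))"

(* T^r = T^{r,1} ... T^{r,t} *)
definition T_mat :: "nat \<Rightarrow> 'a::field mat \<Rightarrow> (nat \<times> nat) set \<Rightarrow> nat \<Rightarrow> 'a mat" where
  "T_mat m D N r =
     (if N = {} then 1\<^sub>m m
      else foldr (\<lambda>j A. T_elem m D r j * A) (sorted_list_of_set (snd ` N)) (1\<^sub>m m))"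

definition rca_update :: "nat \<Rightarrow> 'a::field mat \<Rightarrow> (nat \<times> nat) set \<Rightarrow> nat \<Rightarrow> 'a mat" where
  "rca_update m D N r = mat_inv m (T_mat m D N r) * D * T_mat m D N r"

(* rca m D r = (matrix Delta~^{r+1}, set of positions marked in iterations 1..r),
   for r \<le> m-2; rca m D (m-1) = (Delta~^{m-1}, all primary pivot positions). *)
fun rca :: "nat \<Rightarrow> 'a::field mat \<Rightarrow> nat \<Rightarrow> 'a mat \<times> (nat \<times> nat) set" where
  "rca m D 0 = (D, {})"
| "rca m D (Suc r) =
     (let A = fst (rca m D r); P = snd (rca m D r); N = new_pivots m A P (Suc r)
      in (if Suc r \<le> m - 2 then rca_update m A N (Suc r) else A, P \<union> N))"

definition rca_final :: "nat \<Rightarrow> 'a::field mat \<Rightarrow> 'a mat" where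
  "rca_final m D = fst (rca m D (m - 1))"

definition rca_pivots :: "nat \<Rightarrow> 'a::field mat \<Rightarrow> (nat \<times> nat) set" where
  "rca_pivots m D = snd (rca m D (m - 1))"

definition block_restrict :: "nat \<Rightarrow> 'a::field mat \<Rightarrow> nat set \<Rightarrow> nat set \<Rightarrow> nat set \<Rightarrow> 'a mat" where
  "block_restrict m D Jprev E Jk = mat m m (\<lambda>(i,j). if i \<in> Jprev - E \<and> j \<in> Jk then D $$ (i,j) else 0)"

fun bs_cols :: "nat \<Rightarrow> 'a::field mat \<Rightarrow> (nat \<Rightarrow> nat set) \<Rightarrow> nat \<Rightarrow> nat set" where
  "bs_cols m D J 0 = {}"
| "bs_cols m D J (Suc k) =
     snd ` rca_pivots m (block_restrict m D (J k) (bs_cols m D J k) (J (Suc k)))"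

definition bs_block :: "nat \<Rightarrow> 'a::field mat \<Rightarrow> (nat \<Rightarrow> nat set) \<Rightarrow> nat \<Rightarrow> 'a mat" where
  "bs_block m D J k = block_restrict m D (J (k-1)) (bs_cols m D J (k-1)) (J k)"

end

theory Submission
  imports Defs "Jordan_Normal_Form.Determinant"
begin

text \<open>
  Let \<open>T\<close> be the product of the elementary matrices of one RCA step and \<open>N\<close> the matrix holding the
  multipliers of the rows of the new pivots. In the reverse order the nilpotent parts of the factors
  multiply to zero, so \<open>T\<^sup>-\<^sup>1 = I + N\<close> and the update is \<open>(I + N)(A T)\<close>; this gives an entrywise
  description of one step. Along the run the usual invariant is kept: the matrix stays strictly upper
  triangular with square zero, every marked pivot is the lowest nonzero entry of its column, and the
  row indexed by a pivot column vanishes.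

  For a connection matrix every step also preserves the grading \<open>J\<^sub>k\<^sub>-\<^sub>1 \<rightarrow> J\<^sub>k\<close>. Hence the entries of
  \<open>A T\<close> and of \<open>(I + N)(A T)\<close> in the block \<open>J\<^sub>k\<^sub>-\<^sub>1 \<times> J\<^sub>k\<close> only depend on entries of that block, except
  through rows of \<open>J\<^sub>k\<^sub>-\<^sub>1\<close> that are pivot columns, and those vanish. By induction over the iterations the
  run on \<open>\<Delta>(k)\<close> therefore reproduces the run on \<open>\<Delta>\<close> in that block, and its pivots are the pivots of the
  full run lying in the columns \<open>J\<^sub>k\<close>; in particular the columns removed from the rows of block \<open>k + 1\<close>
  are exactly the pivot columns in \<open>J\<^sub>k\<close>.
\<close>

section \<open>The inverse of the transformation matrix\<close>

lemma mat_mult_index_sum: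
  assumes "A \<in> carrier_mat m m" "B \<in> carrier_mat m m" "i < m" "j < m"
  shows "(A * B) $$ (i,j) = (\<Sum>l<m. A $$ (i,l) * B $$ (l,j))"
  using assms by (auto simp: scalar_prod_def lessThan_atLeast0 intro!: sum.cong)

definition elim_coeff :: "'a::field mat \<Rightarrow> nat set \<Rightarrow> nat \<Rightarrow> nat \<Rightarrow> nat \<Rightarrow> 'a" where
  "elim_coeff A C r p q = (if p \<in> C \<and> p < q then A $$ (p - r, q) / A $$ (p - r, p) else 0)"

definition T_mat_inverse :: "nat \<Rightarrow> 'a::field mat \<Rightarrow> nat set \<Rightarrow> nat \<Rightarrow> 'a mat" where
  "T_mat_inverse m A C r = mat m m (\<lambda>(p,q). (if p = q then 1 else 0) + elim_coeff A C r p q)"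

definition col_reduce :: "nat \<Rightarrow> 'a::field mat \<Rightarrow> (nat \<times> nat) set \<Rightarrow> nat \<Rightarrow> 'a mat" where
  "col_reduce m A N r = A * T_mat m A N r"

lemma elim_coeff_nonzeroD:
  "elim_coeff A C r x q \<noteq> 0 \<Longrightarrow> x \<in> C \<and> x < q \<and> A $$ (x - r, q) \<noteq> 0 \<and> A $$ (x - r, x) \<noteq> 0"
  by (auto simp: elim_coeff_def split: if_splits)

lemma T_elem_carrier [simp]: "T_elem m A r j \<in> carrier_mat m m"
  by (simp add: T_elem_def)

lemma T_mat_inverse_carrier [simp]: "T_mat_inverse m A C r \<in> carrier_mat m m"
  by (simp add: T_mat_inverse_def)

lemma T_mat_foldr:
  "T_mat m A N r = foldr (\<lambda>j X. T_elem m A r j * X) (sorted_list_of_set (snd ` N)) (1\<^sub>m m)"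
  by (simp add: T_mat_def)

lemma foldr_T_elem_carrier: "foldr (\<lambda>j X. T_elem m A r j * X) L (1\<^sub>m m) \<in> carrier_mat m m"
  by (induction L) (auto intro!: mult_carrier_mat[OF T_elem_carrier])

lemma T_mat_carrier [simp]: "T_mat m A N r \<in> carrier_mat m m"
  by (simp add: T_mat_foldr foldr_T_elem_carrier)

lemma mult_T_elem_index:
  assumes X: "X \<in> carrier_mat m m" and p: "p < m" and q: "q < m" and j: "j < m"
  shows "(X * T_elem m A r j) $$ (p,q) =
    X $$ (p,q) - (if j < q then X $$ (p,j) * (A $$ (j - r, q) / A $$ (j - r, j)) else 0)"
proof -
  let ?c = "A $$ (j - r, q) / A $$ (j - r, j)"
  have "(X * T_elem m A r j) $$ (p,q) =
     (\<Sum>l<m. X $$ (p,l) * ((if l = q then 1 else 0) - (if l = j \<and> j < q then ?c else 0)))"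
    using X p q by (subst mat_mult_index_sum) (auto simp: T_elem_def intro!: sum.cong)
  also have "\<dots> = (\<Sum>l<m. (if l = q then X $$ (p,l) else 0)) -
      (\<Sum>l<m. (if l = j then (if j < q then X $$ (p,l) * ?c else 0) else 0))"
    by (subst sum_subtractf[symmetric], rule sum.cong) (auto simp: algebra_simps)
  also have "\<dots> = X $$ (p,q) - (if j < q then X $$ (p,j) * ?c else 0)"
    using q j by simp
  finally show ?thesis .
qed

lemma T_mat_inverse_insert_mult_T_elem:
  assumes "\<forall>x\<in>C. j < x" "j < m"
  shows "T_mat_inverse m A (insert j C) r * T_elem m A r j = T_mat_inverse m A C r"
proof (rule eq_matI)
  fix p q assume "p < dim_row (T_mat_inverse m A C r)" "q < dim_col (T_mat_inverse m A C r)"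
  then have "p < m" "q < m" by (auto simp: T_mat_inverse_def)
  then show "(T_mat_inverse m A (insert j C) r * T_elem m A r j) $$ (p, q) = T_mat_inverse m A C r $$ (p, q)"
    using assms
    by (subst mult_T_elem_index[OF T_mat_inverse_carrier]) (auto simp: T_mat_inverse_def elim_coeff_def)
qed (auto simp: T_mat_inverse_def T_elem_def)

lemma T_mat_inverse_mult_foldr:
  assumes "sorted L" "distinct L" "set L \<subseteq> {..<m}"
  shows "T_mat_inverse m A (set L) r * foldr (\<lambda>j X. T_elem m A r j * X) L (1\<^sub>m m) = 1\<^sub>m m"
  using assms
proof (induction L)
  case Nil
  show ?case by (rule eq_matI) (auto simp: T_mat_inverse_def elim_coeff_def)
next
  case (Cons j L)
  let ?F = "foldr (\<lambda>j X. T_elem m A r j * X) L (1\<^sub>m m)"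
  have "\<forall>x\<in>set L. j < x" "j < m"
    using Cons.prems by (auto simp: order.order_iff_strict)
  then have "T_mat_inverse m A (set (j # L)) r * (T_elem m A r j * ?F) = T_mat_inverse m A (set L) r * ?F"
    by (simp add: foldr_T_elem_carrier assoc_mult_mat[of _ m m _ m _ m, symmetric]
        T_mat_inverse_insert_mult_T_elem)
  then show ?case using Cons by simp
qed

lemma T_mat_inverse_mult_T_mat:
  assumes "finite N" "snd ` N \<subseteq> {..<m}"
  shows "T_mat_inverse m A (snd ` N) r * T_mat m A N r = 1\<^sub>m m"
  using T_mat_inverse_mult_foldr[of "sorted_list_of_set (snd ` N)" m A r] assms
  by (simp add: T_mat_foldr)

lemma mat_inv_eqI:
  assumes T: "T \<in> carrier_mat m m" and U: "U \<in> carrier_mat m m" and UT: "U * T = 1\<^sub>m m"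
  shows "mat_inv m T = U"
proof -
  have TU: "T * U = 1\<^sub>m m" by (rule mat_mult_left_right_inverse[OF U T UT])
  let ?B = "mat_inv m T"
  have B: "?B \<in> carrier_mat m m \<and> T * ?B = 1\<^sub>m m \<and> ?B * T = 1\<^sub>m m"
    unfolding mat_inv_def by (rule someI[of _ U]) (use U TU UT in auto)
  have "?B = ?B * (T * U)" using B TU by (metis right_mult_one_mat)
  also have "\<dots> = (?B * T) * U" using B T U by (metis assoc_mult_mat)
  also have "\<dots> = U" using B U by simp
  finally show ?thesis .
qed

context
  fixes m :: nat and A :: "'a::field mat" and N :: "(nat \<times> nat) set" and r :: nat
  assumes A: "A \<in> carrier_mat m m" and N_finite: "finite N" and N_cols: "snd ` N \<subseteq> {..<m}"
begin

lemma col_reduce_carrier: "col_reduce m A N r \<in> carrier_mat m m"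
  using A by (simp add: col_reduce_def)

lemma rca_update_eq: "rca_update m A N r = T_mat_inverse m A (snd ` N) r * col_reduce m A N r"
  unfolding rca_update_def col_reduce_def
    mat_inv_eqI[OF T_mat_carrier T_mat_inverse_carrier T_mat_inverse_mult_T_mat[OF N_finite N_cols]]
  using A by (metis assoc_mult_mat T_mat_inverse_carrier T_mat_carrier)

lemma rca_update_carrier: "rca_update m A N r \<in> carrier_mat m m"
  unfolding rca_update_eq by (rule mult_carrier_mat[OF T_mat_inverse_carrier col_reduce_carrier])

lemma col_reduce_mult_T_mat_inverse: "col_reduce m A N r * T_mat_inverse m A (snd ` N) r = A"
proof -
  have TU: "T_mat m A N r * T_mat_inverse m A (snd ` N) r = 1\<^sub>m m"
    by (rule mat_mult_left_right_inverse[OF T_mat_inverse_carrier T_mat_carrier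
          T_mat_inverse_mult_T_mat[OF N_finite N_cols]])
  have "col_reduce m A N r * T_mat_inverse m A (snd ` N) r = A * (T_mat m A N r * T_mat_inverse m A (snd ` N) r)"
    unfolding col_reduce_def using A by (metis assoc_mult_mat T_mat_inverse_carrier T_mat_carrier)
  then show ?thesis unfolding TU using A by simp
qed

lemma rca_update_index:
  assumes "i < m" "j < m"
  shows "rca_update m A N r $$ (i,j) = col_reduce m A N r $$ (i,j) +
           (\<Sum>p<m. elim_coeff A (snd ` N) r i p * col_reduce m A N r $$ (p,j))"
proof -
  let ?B = "col_reduce m A N r"
  have "rca_update m A N r $$ (i,j) =
     (\<Sum>p<m. ((if i = p then 1 else 0) + elim_coeff A (snd ` N) r i p) * ?B $$ (p,j))"
    unfolding rca_update_eq using assms col_reduce_carrier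
    by (subst mat_mult_index_sum[of _ m]) (auto simp: T_mat_inverse_def intro!: sum.cong)
  also have "\<dots> = (\<Sum>p<m. (if i = p then ?B $$ (p,j) else 0)) +
                   (\<Sum>p<m. elim_coeff A (snd ` N) r i p * ?B $$ (p,j))"
    by (subst sum.distrib[symmetric], rule sum.cong) (auto simp: algebra_simps)
  finally show ?thesis using assms by simp
qed

lemma index_col_reduce_expansion:
  assumes "i < m" "q < m"
  shows "A $$ (i,q) = col_reduce m A N r $$ (i,q) +
           (\<Sum>x<m. col_reduce m A N r $$ (i,x) * elim_coeff A (snd ` N) r x q)"
proof -
  let ?B = "col_reduce m A N r"
  have "A $$ (i,q) = (?B * T_mat_inverse m A (snd ` N) r) $$ (i,q)"
    by (simp add: col_reduce_mult_T_mat_inverse)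
  also have "\<dots> = (\<Sum>x<m. ?B $$ (i,x) * ((if x = q then 1 else 0) + elim_coeff A (snd ` N) r x q))"
    using assms col_reduce_carrier
    by (subst mat_mult_index_sum[of _ m]) (auto simp: T_mat_inverse_def intro!: sum.cong)
  also have "\<dots> = (\<Sum>x<m. (if x = q then ?B $$ (i,x) else 0)) +
                   (\<Sum>x<m. ?B $$ (i,x) * elim_coeff A (snd ` N) r x q)"
    by (subst sum.distrib[symmetric], rule sum.cong) (auto simp: algebra_simps)
  finally show ?thesis using assms by simp
qed

lemma mult_col_reduce_zero:
  assumes "A * A = 0\<^sub>m m m"
  shows "A * col_reduce m A N r = 0\<^sub>m m m"
proof -
  have "A * col_reduce m A N r = (A * A) * T_mat m A N r"
    unfolding col_reduce_def using A by (metis assoc_mult_mat T_mat_carrier)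
  then show ?thesis using assms by (simp add: left_mult_zero_mat[OF T_mat_carrier])
qed

lemma rca_update_square_zero:
  assumes "A * A = 0\<^sub>m m m"
  shows "rca_update m A N r * rca_update m A N r = 0\<^sub>m m m"
proof -
  let ?U = "T_mat_inverse m A (snd ` N) r" and ?B = "col_reduce m A N r"
  have U: "?U \<in> carrier_mat m m" by simp
  note B = col_reduce_carrier
  have "rca_update m A N r * rca_update m A N r = ?U * ((?B * ?U) * ?B)"
    unfolding rca_update_eq
    by (simp add: assoc_mult_mat[OF U B mult_carrier_mat[OF U B]] assoc_mult_mat[OF B U B])
  also have "\<dots> = ?U * (A * ?B)" by (simp add: col_reduce_mult_T_mat_inverse)
  also have "\<dots> = 0\<^sub>m m m" by (simp add: mult_col_reduce_zero[OF assms] right_mult_zero_mat[OF U])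
  finally show ?thesis .
qed

lemma col_reduce_zero_row:
  assumes "p < m" "\<forall>q<m. A $$ (p,q) = 0" "j < m"
  shows "col_reduce m A N r $$ (p,j) = 0"
  unfolding col_reduce_def using assms A by (subst mat_mult_index_sum[of _ m]) auto

end

lemma new_pivots_iff:
  "(i,j) \<in> new_pivots m A P r \<longleftrightarrow>
     r \<le> j \<and> j < m \<and> i = j - r \<and> A $$ (j - r, j) \<noteq> 0 \<and> (\<forall>i'. (i',j) \<notin> P)"
  by (auto simp: new_pivots_def)

lemma new_pivot_cols_iff:
  "x \<in> snd ` new_pivots m A P r \<longleftrightarrow> r \<le> x \<and> x < m \<and> A $$ (x - r, x) \<noteq> 0 \<and> (\<forall>i'. (i',x) \<notin> P)"
  by (force simp: new_pivots_def)

lemma new_pivots_finite: "finite (new_pivots m A P r)"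
proof (rule finite_subset)
  show "new_pivots m A P r \<subseteq> (\<lambda>j. (j - r, j)) ` {..<m}" by (auto simp: new_pivots_def)
qed simp

lemma new_pivot_cols_bounded: "snd ` new_pivots m A P r \<subseteq> {..<m}"
  by (auto simp: new_pivots_def)

lemma rca_Suc_fst:
  "fst (rca m X (Suc r)) =
     (if Suc r \<le> m - 2
      then rca_update m (fst (rca m X r)) (new_pivots m (fst (rca m X r)) (snd (rca m X r)) (Suc r)) (Suc r)
      else fst (rca m X r))"
  by (simp add: Let_def)

lemma rca_Suc_snd:
  "snd (rca m X (Suc r)) = snd (rca m X r) \<union> new_pivots m (fst (rca m X r)) (snd (rca m X r)) (Suc r)"
  by (simp add: Let_def)

declare rca.simps(2) [simp del]

lemma rca_carrier: "X \<in> carrier_mat m m \<Longrightarrow> fst (rca m X r) \<in> carrier_mat m m"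
  by (induction r) (auto simp: rca_Suc_fst intro: rca_update_carrier[OF _ new_pivots_finite new_pivot_cols_bounded])

lemma rca_pivots_mono: "r \<le> r' \<Longrightarrow> snd (rca m X r) \<subseteq> snd (rca m X r')"
  by (induction r' rule: dec_induct) (auto simp: rca_Suc_snd)

section \<open>The invariant of the row cancellation algorithm\<close>

definition rca_invariant :: "nat \<Rightarrow> nat \<Rightarrow> 'a::field mat \<Rightarrow> (nat \<times> nat) set \<Rightarrow> bool" where
  "rca_invariant m r A P \<longleftrightarrow> A \<in> carrier_mat m m \<and> A * A = 0\<^sub>m m m \<and>
     (\<forall>i<m. \<forall>j<m. A $$ (i,j) \<noteq> 0 \<longrightarrow> i < j) \<and>
     (\<forall>i j. i < j \<and> j < m \<and> j - i \<le> r \<and> (\<forall>i'. (i',j) \<notin> P) \<longrightarrow> A $$ (i,j) = 0) \<and>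
     (\<forall>i j. (i,j) \<in> P \<longrightarrow> i < j \<and> j < m \<and> j - i \<le> r \<and> A $$ (i,j) \<noteq> 0 \<and>
        (\<forall>l. i < l \<and> l < m \<longrightarrow> A $$ (l,j) = 0)) \<and>
     (\<forall>i x. (i,x) \<in> P \<longrightarrow> (\<forall>q<m. A $$ (x,q) = 0))"

definition pivots_reduced :: "nat \<Rightarrow> 'a::field mat \<Rightarrow> (nat \<times> nat) set \<Rightarrow> bool" where
  "pivots_reduced m A P \<longleftrightarrow>
     (\<forall>i j. (i,j) \<in> P \<longrightarrow> i < j \<and> j < m \<and> A $$ (i,j) \<noteq> 0) \<and>
     (\<forall>i x. (i,x) \<in> P \<longrightarrow> (\<forall>q<m. A $$ (x,q) = 0))"

locale rca_step =
  fixes m r :: nat and A :: "'a::field mat" and P :: "(nat \<times> nat) set"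
  assumes invariant: "rca_invariant m r A P"
begin

abbreviation "new \<equiv> new_pivots m A P (Suc r)"
abbreviation "new_cols \<equiv> snd ` new"
abbreviation "B \<equiv> col_reduce m A new (Suc r)"
abbreviation "E \<equiv> elim_coeff A new_cols (Suc r)"
abbreviation "A' \<equiv> rca_update m A new (Suc r)"

lemma carrier: "A \<in> carrier_mat m m"
  and square_zero: "A * A = 0\<^sub>m m m"
  and upper: "\<And>i j. i < m \<Longrightarrow> j < m \<Longrightarrow> A $$ (i,j) \<noteq> 0 \<Longrightarrow> i < j"
  and unmarked_zero: "\<And>i j. i < j \<Longrightarrow> j < m \<Longrightarrow> j - i \<le> r \<Longrightarrow> (\<forall>i'. (i',j) \<notin> P) \<Longrightarrow> A $$ (i,j) = 0"
  and marked: "\<And>i j. (i,j) \<in> P \<Longrightarrow> i < j \<and> j < m \<and> j - i \<le> r \<and> A $$ (i,j) \<noteq> 0 \<and>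
                  (\<forall>l. i < l \<and> l < m \<longrightarrow> A $$ (l,j) = 0)"
  and marked_row_zero: "\<And>i x q. (i,x) \<in> P \<Longrightarrow> q < m \<Longrightarrow> A $$ (x,q) = 0"
  using invariant unfolding rca_invariant_def by blast+

lemma new_finite: "finite new"
  by (rule new_pivots_finite)

lemma new_cols_bounded: "new_cols \<subseteq> {..<m}"
  by (rule new_pivot_cols_bounded)

lemma lower_zero: "i < m \<Longrightarrow> j < m \<Longrightarrow> j \<le> i \<Longrightarrow> A $$ (i,j) = 0"
  using upper by (meson leD)

lemma below_new_pivot_zero:
  assumes "(i,j) \<in> new" "i < l" "l < m"
  shows "A $$ (l,j) = 0"
proof (cases "j \<le> l")
  case True
  then show ?thesis using lower_zero assms by (auto simp: new_pivots_iff)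
next
  case False
  then show ?thesis using assms by (intro unmarked_zero) (auto simp: new_pivots_iff)
qed

lemma index_expansion: "i < m \<Longrightarrow> q < m \<Longrightarrow> A $$ (i,q) = B $$ (i,q) + (\<Sum>x<m. B $$ (i,x) * E x q)"
  by (rule index_col_reduce_expansion[OF carrier new_finite new_cols_bounded])

lemma update_index: "i < m \<Longrightarrow> j < m \<Longrightarrow> A' $$ (i,j) = B $$ (i,j) + (\<Sum>p<m. E i p * B $$ (p,j))"
  by (rule rca_update_index[OF carrier new_finite new_cols_bounded])

lemma col_reduce_new_col_zero:
  assumes "x \<in> new_cols" "l < m" "x < l + Suc r"
  shows "B $$ (l,x) = 0"
  using assms
proof (induction x rule: less_induct)
  case (less x)
  have xm: "x < m" using less.prems by (simp add: new_pivot_cols_iff)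
  have "A $$ (l,x) = 0"
  proof (rule ccontr)
    assume nz: "A $$ (l,x) \<noteq> 0"
    then have "l < x" "x - l \<le> r" using upper less.prems xm by auto
    then show False using unmarked_zero[of l x] nz less.prems xm by (auto simp: new_pivot_cols_iff)
  qed
  moreover have "B $$ (l,x') * E x' x = 0" for x'
    using less.IH less.prems elim_coeff_nonzeroD[of A new_cols "Suc r" x' x] by fastforce
  ultimately show ?case using index_expansion[OF less.prems(2) xm] by simp
qed

lemma col_reduce_eq:
  assumes lm: "l < m" and jm: "j < m" and cols: "\<forall>x\<in>new_cols. x < j \<longrightarrow> x < l + Suc r"
  shows "B $$ (l,j) = A $$ (l,j)"
proof -
  have "B $$ (l,x) * E x j = 0" for x
    using col_reduce_new_col_zero cols lm elim_coeff_nonzeroD[of A new_cols "Suc r" x j] by fastforce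
  with index_expansion[OF lm jm] show ?thesis by simp
qed

lemma update_eq_col_reduce:
  assumes lm: "l < m" and jm: "j < m" and below: "\<forall>p. l < p \<and> p < m \<longrightarrow> B $$ (p,j) = 0"
  shows "A' $$ (l,j) = B $$ (l,j)"
proof -
  have "E l p * B $$ (p,j) = 0" if "p \<in> {..<m}" for p
    using below that elim_coeff_nonzeroD[of A new_cols "Suc r" l p] by fastforce
  then show ?thesis using update_index[OF lm jm] by (simp add: sum.neutral)
qed

lemma col_reduce_lower_zero:
  assumes "q < m" "l < m" "q \<le> l"
  shows "B $$ (l,q) = 0"
  using assms
proof (induction q rule: less_induct)
  case (less q)
  have "A $$ (l,q) = 0" using lower_zero less.prems by simp
  moreover have "B $$ (l,x) * E x q = 0" if "x \<in> {..<m}" for x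
    using less.IH less.prems that elim_coeff_nonzeroD[of A new_cols "Suc r" x q] by fastforce
  ultimately show ?case using index_expansion[OF less.prems(2) less.prems(1)] by (simp add: sum.neutral)
qed

lemma update_upper: "\<forall>i<m. \<forall>j<m. A' $$ (i,j) \<noteq> 0 \<longrightarrow> i < j"
proof (intro allI impI, rule ccontr)
  fix i j assume ij: "i < m" "j < m" "A' $$ (i,j) \<noteq> 0" "\<not> i < j"
  then have "A' $$ (i,j) = B $$ (i,j)" using update_eq_col_reduce col_reduce_lower_zero by simp
  then show False using col_reduce_lower_zero ij by simp
qed

lemma update_unmarked_zero:
  assumes ij: "i < j" and jm: "j < m" and d: "j - i \<le> Suc r" and um: "\<forall>i'. (i',j) \<notin> P \<union> new"
  shows "A' $$ (i,j) = 0"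
proof -
  have A_zero: "A $$ (l,j) = 0" if "i \<le> l" "l < m" for l
  proof (cases "j \<le> l")
    case True
    then show ?thesis using lower_zero that jm by blast
  next
    case False
    show ?thesis
    proof (cases "j - l \<le> r")
      case True
      then show ?thesis using unmarked_zero[of l j] False jm um by auto
    next
      case False
      then have "l = j - Suc r" "Suc r \<le> j" using d that by auto
      moreover have "(l,j) \<notin> new" using um by blast
      ultimately show ?thesis using um jm by (auto simp: new_pivots_iff)
    qed
  qed
  have B_zero: "B $$ (l,j) = 0" if "i \<le> l" "l < m" for l
  proof -
    have "\<forall>x\<in>new_cols. x < j \<longrightarrow> x < l + Suc r" using d that by auto
    then show ?thesis using col_reduce_eq[OF that(2) jm] A_zero[OF that] by simp
  qed
  have "i < m" using ij jm by simp
  then show ?thesis using update_eq_col_reduce B_zero jm by simp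
qed

lemma update_keeps_lowest:
  assumes ij: "i < j" and jm: "j < m" and nz: "A $$ (i,j) \<noteq> 0"
    and below: "\<forall>l. i < l \<and> l < m \<longrightarrow> A $$ (l,j) = 0" and d: "j \<le> i + Suc r"
  shows "A' $$ (i,j) \<noteq> 0 \<and> (\<forall>l. i < l \<and> l < m \<longrightarrow> A' $$ (l,j) = 0)"
proof -
  have B_eq: "B $$ (l,j) = A $$ (l,j)" if "i \<le> l" "l < m" for l
  proof -
    have "\<forall>x\<in>new_cols. x < j \<longrightarrow> x < l + Suc r" using d that by auto
    then show ?thesis using col_reduce_eq[OF that(2) jm] by simp
  qed
  have "A' $$ (l,j) = A $$ (l,j)" if "i \<le> l" "l < m" for l
    using update_eq_col_reduce[OF that(2) jm] B_eq below that by auto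
  then show ?thesis using below nz ij jm by auto
qed

lemma update_marked:
  assumes "(i,j) \<in> P \<union> new"
  shows "i < j \<and> j < m \<and> j - i \<le> Suc r \<and> A' $$ (i,j) \<noteq> 0 \<and> (\<forall>l. i < l \<and> l < m \<longrightarrow> A' $$ (l,j) = 0)"
  using assms
proof
  assume "(i,j) \<in> P"
  note ij = marked[OF this]
  then have "j \<le> i + Suc r" by arith
  then show ?thesis using ij update_keeps_lowest[of i j] by auto
next
  assume ij: "(i,j) \<in> new"
  then show ?thesis
    using update_keeps_lowest[of i j] below_new_pivot_zero[OF ij] by (auto simp: new_pivots_iff)
qed

text \<open>Row \<open>i\<close> of \<open>A B = 0\<close>, where \<open>(i,x)\<close> is a new pivot: the entries of row \<open>i\<close> left of \<open>x\<close> sit in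
  marked columns, whose rows in \<open>B\<close> vanish.\<close>

lemma new_pivot_row_relation:
  assumes ix: "(i,x) \<in> new" and qm: "q < m"
  shows "A $$ (i,x) * B $$ (x,q) + (\<Sum>p<m. if x < p then A $$ (i,p) * B $$ (p,q) else 0) = 0"
proof -
  have x: "Suc r \<le> x" "x < m" "i = x - Suc r" using ix by (auto simp: new_pivots_iff)
  have im: "i < m" using x by simp
  have left: "A $$ (i,p) * B $$ (p,q) = 0" if "p < x" "p < m" for p
  proof (cases "A $$ (i,p) = 0")
    case False
    moreover have "i < p" "p - i \<le> r" using upper[of i p] False im that x by auto
    ultimately have "\<exists>i'. (i',p) \<in> P" using unmarked_zero[of i p] that x by auto
    then have "B $$ (p,q) = 0"
      using col_reduce_zero_row[OF carrier new_finite new_cols_bounded] marked_row_zero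
        that qm by blast
    then show ?thesis by simp
  qed simp
  have "0 = (A * B) $$ (i,q)"
    using mult_col_reduce_zero[OF carrier new_finite new_cols_bounded square_zero] im qm
    by simp
  also have "\<dots> = (\<Sum>p<m. A $$ (i,p) * B $$ (p,q))"
    using im qm
    by (rule mat_mult_index_sum[OF carrier col_reduce_carrier[OF carrier new_finite new_cols_bounded]])
  also have "\<dots> = (\<Sum>p<m. (if p = x then A $$ (i,p) * B $$ (p,q) else 0) +
                          (if x < p then A $$ (i,p) * B $$ (p,q) else 0))"
    using left by (intro sum.cong) auto
  also have "\<dots> = A $$ (i,x) * B $$ (x,q) + (\<Sum>p<m. if x < p then A $$ (i,p) * B $$ (p,q) else 0)"
    using x by (simp add: sum.distrib)
  finally show ?thesis by simp
qed

lemma update_marked_row_zero: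
  assumes ix: "(i,x) \<in> P \<union> new" and qm: "q < m"
  shows "A' $$ (x,q) = 0"
proof (cases "(i,x) \<in> P")
  case True
  have xm: "x < m" using marked[OF True] by simp
  have "x \<notin> new_cols" using True by (auto simp: new_pivot_cols_iff)
  then have "E x p = 0" for p by (simp add: elim_coeff_def)
  moreover have "B $$ (x,q) = 0"
    using col_reduce_zero_row[OF carrier new_finite new_cols_bounded xm _ qm]
      marked_row_zero[OF True] by blast
  ultimately show ?thesis using update_index[OF xm qm] by simp
next
  case False
  then have new: "(i,x) \<in> new" using ix by simp
  then have x: "x < m" "i = x - Suc r" "A $$ (i,x) \<noteq> 0" "x \<in> new_cols"
    by (auto simp: new_pivots_iff new_pivot_cols_iff)
  have coeff: "A $$ (i,x) * E x p * B $$ (p,q) = (if x < p then A $$ (i,p) * B $$ (p,q) else 0)" for p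
    using x by (simp add: elim_coeff_def)
  have "A $$ (i,x) * A' $$ (x,q) = A $$ (i,x) * B $$ (x,q) + (\<Sum>p<m. A $$ (i,x) * E x p * B $$ (p,q))"
    using update_index[OF x(1) qm] by (simp add: distrib_left sum_distrib_left mult.assoc)
  also have "\<dots> = 0" unfolding coeff by (rule new_pivot_row_relation[OF new qm])
  finally show ?thesis using x(3) by simp
qed

lemma rca_invariant_update: "rca_invariant m (Suc r) A' (P \<union> new)"
proof -
  have "\<forall>i j. i < j \<and> j < m \<and> j - i \<le> Suc r \<and> (\<forall>i'. (i',j) \<notin> P \<union> new) \<longrightarrow> A' $$ (i,j) = 0"
    using update_unmarked_zero by blast
  moreover have "\<forall>i j. (i,j) \<in> P \<union> new \<longrightarrow> i < j \<and> j < m \<and> j - i \<le> Suc r \<and> A' $$ (i,j) \<noteq> 0 \<and>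
      (\<forall>l. i < l \<and> l < m \<longrightarrow> A' $$ (l,j) = 0)"
    using update_marked by blast
  moreover have "\<forall>i x. (i,x) \<in> P \<union> new \<longrightarrow> (\<forall>q<m. A' $$ (x,q) = 0)"
    using update_marked_row_zero by blast
  ultimately show ?thesis
    unfolding rca_invariant_def
    using rca_update_carrier[OF carrier new_finite new_cols_bounded]
      rca_update_square_zero[OF carrier new_finite new_cols_bounded square_zero] update_upper
    by (intro conjI) assumption+
qed

text \<open>At the last iteration the only possible new pivot is \<open>(0, m - 1)\<close>, whose column index
  labels a zero row of the upper triangular matrix; no update is performed.\<close>

lemma pivots_reduced_last:
  assumes "Suc r = m - 1"
  shows "pivots_reduced m A (P \<union> new)"
proof -
  have "i < j \<and> j < m \<and> A $$ (i,j) \<noteq> 0" if "(i,j) \<in> P \<union> new" for i j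
    using that marked assms by (auto simp: new_pivots_iff)
  moreover have "A $$ (x,q) = 0" if ix: "(i,x) \<in> P \<union> new" and qm: "q < m" for i x q
  proof (cases "(i,x) \<in> P")
    case True
    then show ?thesis using marked_row_zero qm by blast
  next
    case False
    then have "x = m - 1" using ix assms by (auto simp: new_pivots_iff)
    then show ?thesis using lower_zero[of x q] qm by simp
  qed
  ultimately show ?thesis unfolding pivots_reduced_def by blast
qed

end

lemma rca_invariant_rca:
  assumes "D \<in> carrier_mat m m" "D * D = 0\<^sub>m m m" "\<forall>i<m. \<forall>j<m. D $$ (i,j) \<noteq> 0 \<longrightarrow> i < j"
  shows "r \<le> m - 2 \<Longrightarrow> rca_invariant m r (fst (rca m D r)) (snd (rca m D r))"
proof (induction r)
  case 0
  show ?case using assms by (auto simp: rca_invariant_def)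
next
  case (Suc r)
  then interpret rca_step m r "fst (rca m D r)" "snd (rca m D r)"
    by unfold_locales simp
  show ?case using rca_invariant_update Suc.prems by (simp add: rca_Suc_fst rca_Suc_snd)
qed

lemma pivots_reduced_rca:
  assumes D: "D \<in> carrier_mat m m" "D * D = 0\<^sub>m m m" "\<forall>i<m. \<forall>j<m. D $$ (i,j) \<noteq> 0 \<longrightarrow> i < j"
    and "m \<ge> 1"
  shows "pivots_reduced m (rca_final m D) (rca_pivots m D)"
proof (cases "m = 1")
  case True
  then show ?thesis by (simp add: rca_final_def rca_pivots_def pivots_reduced_def)
next
  case False
  then have last: "m - 1 = Suc (m - 2)" using \<open>m \<ge> 1\<close> by arith
  interpret rca_step m "m - 2" "fst (rca m D (m - 2))" "snd (rca m D (m - 2))"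
    by unfold_locales (rule rca_invariant_rca[OF D], simp)
  show ?thesis
    using pivots_reduced_last last by (simp add: rca_final_def rca_pivots_def rca_Suc_fst rca_Suc_snd)
qed

section \<open>Gradings\<close>

definition graded :: "nat \<Rightarrow> (nat \<Rightarrow> nat) \<Rightarrow> 'a::zero mat \<Rightarrow> bool" where
  "graded m g A \<longleftrightarrow> (\<forall>i<m. \<forall>j<m. A $$ (i,j) \<noteq> 0 \<longrightarrow> g j = Suc (g i))"

context
  fixes m :: nat and A :: "'a::field mat" and N :: "(nat \<times> nat) set" and r :: nat and g :: "nat \<Rightarrow> nat"
  assumes A: "A \<in> carrier_mat m m" and N_finite: "finite N" and N_cols: "snd ` N \<subseteq> {..<m}"
    and A_graded: "graded m g A"
begin

lemma elim_coeff_grade: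
  assumes "x < m" "q < m" "elim_coeff A (snd ` N) r x q \<noteq> 0"
  shows "g q = g x"
proof -
  have "A $$ (x - r, q) \<noteq> 0" "A $$ (x - r, x) \<noteq> 0" using elim_coeff_nonzeroD[OF assms(3)] by auto
  then show ?thesis using A_graded assms unfolding graded_def by (metis less_imp_diff_less)
qed

lemma col_reduce_graded: "graded m g (col_reduce m A N r)"
  unfolding graded_def
proof (intro allI impI)
  fix i q assume "i < m" "q < m" "col_reduce m A N r $$ (i,q) \<noteq> 0"
  then show "g q = Suc (g i)"
  proof (induction q rule: less_induct)
    case (less q)
    show ?case
    proof (cases "A $$ (i,q) = 0")
      case False
      then show ?thesis using A_graded less.prems unfolding graded_def by blast
    next
      case True
      then have "(\<Sum>x<m. col_reduce m A N r $$ (i,x) * elim_coeff A (snd ` N) r x q) \<noteq> 0"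
        using index_col_reduce_expansion[OF A N_finite N_cols less.prems(1,2)] less.prems(3)
        by (metis add.right_neutral)
      then obtain x where x: "x < m" "col_reduce m A N r $$ (i,x) \<noteq> 0"
          and c: "elim_coeff A (snd ` N) r x q \<noteq> 0"
        by (auto elim: sum.not_neutral_contains_not_neutral)
      have "x < q" using elim_coeff_nonzeroD[OF c] by simp
      then have "g x = Suc (g i)" using less.IH x less.prems by blast
      then show ?thesis using elim_coeff_grade[OF x(1) less.prems(2) c] by simp
    qed
  qed
qed

lemma rca_update_graded: "graded m g (rca_update m A N r)"
  unfolding graded_def
proof (intro allI impI)
  fix i j assume ij: "i < m" "j < m" and nz: "rca_update m A N r $$ (i,j) \<noteq> 0"
  have B: "graded m g (col_reduce m A N r)" by (rule col_reduce_graded)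
  show "g j = Suc (g i)"
  proof (cases "col_reduce m A N r $$ (i,j) = 0")
    case False
    then show ?thesis using B ij unfolding graded_def by blast
  next
    case True
    then have "(\<Sum>p<m. elim_coeff A (snd ` N) r i p * col_reduce m A N r $$ (p,j)) \<noteq> 0"
      using rca_update_index[OF A N_finite N_cols ij] nz by (metis add_0)
    then obtain p where "p < m" "elim_coeff A (snd ` N) r i p \<noteq> 0" "col_reduce m A N r $$ (p,j) \<noteq> 0"
      by (auto elim: sum.not_neutral_contains_not_neutral)
    then show ?thesis using elim_coeff_grade[of i p] B ij unfolding graded_def by auto
  qed
qed

end

lemma graded_rca:
  assumes "X \<in> carrier_mat m m" "graded m g X"
  shows "graded m g (fst (rca m X r))"
proof (induction r)
  case (Suc r)
  have "graded m g (rca_update m (fst (rca m X r)) (new_pivots m (fst (rca m X r)) (snd (rca m X r)) (Suc r)) (Suc r))"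
    by (rule rca_update_graded[OF rca_carrier[OF assms(1)] new_pivots_finite new_pivot_cols_bounded Suc.IH])
  then show ?case using Suc.IH by (simp add: rca_Suc_fst)
qed (simp add: assms)

text \<open>Grade \<open>3\<close> for the indices outside \<open>R \<union> S\<close> leaves a gap, so no nonzero entry can involve them.\<close>

lemma rca_support:
  assumes X: "X \<in> carrier_mat m m" and RS: "R \<inter> S = {}"
    and supp: "\<forall>i<m. \<forall>j<m. X $$ (i,j) \<noteq> 0 \<longrightarrow> i \<in> R \<and> j \<in> S"
    and "i < m" "j < m" "fst (rca m X r) $$ (i,j) \<noteq> 0"
  shows "i \<in> R \<and> j \<in> S"
proof -
  define g where "g i = (if i \<in> R then 0 else if i \<in> S then 1 else 3 :: nat)" for i
  have "graded m g X" using supp RS by (auto simp: graded_def g_def)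
  then have "graded m g (fst (rca m X r))" by (rule graded_rca[OF X])
  then show ?thesis using assms by (auto simp: graded_def g_def split: if_splits)
qed

section \<open>Comparison with the block sequential algorithm\<close>

locale connection_matrix_run =
  fixes m b :: nat and J :: "nat \<Rightarrow> nat set" and D :: "'a::field mat"
  assumes m_pos: "m \<ge> 1" and connection: "connection_matrix m b J D"
begin

lemma D_carrier: "D \<in> carrier_mat m m"
  and partition: "is_partition m b J"
  and D_square_zero: "D * D = 0\<^sub>m m m"
  and D_support: "\<And>i j. i < m \<Longrightarrow> j < m \<Longrightarrow> D $$ (i,j) \<noteq> 0 \<Longrightarrow>
                     i < j \<and> (\<exists>k\<in>{1..b}. i \<in> J (k-1) \<and> j \<in> J k)"
  using connection unfolding connection_matrix_def by blast+

lemma J_bounded: "k \<le> b \<Longrightarrow> J k \<subseteq> {..<m}"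
  using partition unfolding is_partition_def by auto

lemma J_disjoint: "k \<le> b \<Longrightarrow> k' \<le> b \<Longrightarrow> k \<noteq> k' \<Longrightarrow> J k \<inter> J k' = {}"
  using partition unfolding is_partition_def by auto

definition grade :: "nat \<Rightarrow> nat" where
  "grade i = (THE k. k \<le> b \<and> i \<in> J k)"

lemma grade_eq: "k \<le> b \<Longrightarrow> i \<in> J k \<Longrightarrow> grade i = k"
  unfolding grade_def using J_disjoint by (intro the_equality) auto

lemma grade_mem: "i < m \<Longrightarrow> grade i \<le> b \<and> i \<in> J (grade i)"
proof -
  assume "i < m"
  then have "i \<in> (\<Union>k\<in>{0..b}. J k)" using partition unfolding is_partition_def by simp
  then obtain k where "k \<le> b" "i \<in> J k" by auto
  then show ?thesis using grade_eq by simp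
qed

lemma D_upper: "\<forall>i<m. \<forall>j<m. D $$ (i,j) \<noteq> 0 \<longrightarrow> i < j"
  using D_support by blast

lemma D_graded: "graded m grade D"
  unfolding graded_def
proof (intro allI impI)
  fix i j assume "i < m" "j < m" "D $$ (i,j) \<noteq> 0"
  then obtain k where "k \<in> {1..b}" "i \<in> J (k-1)" "j \<in> J k" using D_support by blast
  then show "grade j = Suc (grade i)" using grade_eq[of k j] grade_eq[of "k-1" i] by auto
qed

lemma rca_pivots_reduced: "pivots_reduced m (rca_final m D) (rca_pivots m D)"
  by (rule pivots_reduced_rca[OF D_carrier D_square_zero D_upper m_pos])

lemma pivot_col_not_pivot_row: "(x,j) \<in> rca_pivots m D \<Longrightarrow> (i,x) \<notin> rca_pivots m D"
  using rca_pivots_reduced unfolding pivots_reduced_def by metis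

lemma pivot_grade: "(i,j) \<in> rca_pivots m D \<Longrightarrow> i < m \<and> j < m \<and> grade j = Suc (grade i)"
  using rca_pivots_reduced graded_rca[OF D_carrier D_graded, of "m - 1"]
  unfolding pivots_reduced_def graded_def rca_final_def by (metis less_trans)

definition pivot_cols :: "nat set \<Rightarrow> nat set" where
  "pivot_cols K = {x \<in> K. \<exists>i. (i,x) \<in> rca_pivots m D}"

context
  fixes k :: nat
  assumes k: "k \<in> {1..b}"
begin

abbreviation "R \<equiv> J (k-1) - pivot_cols (J (k-1))"
abbreviation "Dk \<equiv> block_restrict m D (J (k-1)) (pivot_cols (J (k-1))) (J k)"

lemma block_indices: "k - 1 \<le> b" "k \<le> b" "k - 1 \<noteq> k"
  using k by auto

lemma block_disjoint: "J (k-1) \<inter> J k = {}"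
  using J_disjoint block_indices by blast

lemma block_bounded: "J (k-1) \<subseteq> {..<m}" "J k \<subseteq> {..<m}"
  using J_bounded block_indices by blast+

lemma Dk_carrier: "Dk \<in> carrier_mat m m"
  by (simp add: block_restrict_def)

lemma rca_Dk_support:
  "i < m \<Longrightarrow> j < m \<Longrightarrow> fst (rca m Dk r) $$ (i,j) \<noteq> 0 \<Longrightarrow> i \<in> R \<and> j \<in> J k"
  by (rule rca_support[OF Dk_carrier]) (use block_disjoint in \<open>auto simp: block_restrict_def\<close>)

lemma new_pivot_row_in_block:
  assumes ij: "(i,j) \<in> new_pivots m (fst (rca m D r)) (snd (rca m D r)) (Suc r)"
    and r: "Suc r \<le> m - 1" and jk: "j \<in> J k"
  shows "i \<in> R"
proof -
  have piv: "(i,j) \<in> rca_pivots m D"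
    using rca_pivots_mono[OF r, of m D] ij by (auto simp: rca_pivots_def rca_Suc_snd)
  then have "i < m" "grade j = Suc (grade i)" using pivot_grade by auto
  moreover have "grade j = k" using grade_eq k jk by auto
  ultimately have "i \<in> J (k-1)" using grade_mem by force
  moreover have "i \<notin> pivot_cols (J (k-1))"
    using piv pivot_col_not_pivot_row by (auto simp: pivot_cols_def)
  ultimately show ?thesis by simp
qed

context
  fixes r :: nat
  assumes r: "Suc r \<le> m - 1"
    and same_pivots: "snd (rca m Dk r) = {p \<in> snd (rca m D r). snd p \<in> J k}"
    and same_entries: "\<forall>i\<in>R. \<forall>j\<in>J k. fst (rca m D r) $$ (i,j) = fst (rca m Dk r) $$ (i,j)"
begin

abbreviation "A \<equiv> fst (rca m D r)"
abbreviation "P \<equiv> snd (rca m D r)"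
abbreviation "A\<^sub>k \<equiv> fst (rca m Dk r)"
abbreviation "P\<^sub>k \<equiv> snd (rca m Dk r)"
abbreviation "N \<equiv> new_pivots m A P (Suc r)"
abbreviation "N\<^sub>k \<equiv> new_pivots m A\<^sub>k P\<^sub>k (Suc r)"

lemma block_new_pivots: "N\<^sub>k = {p \<in> N. snd p \<in> J k}"
proof (intro equalityI subsetI)
  fix p assume p: "p \<in> N\<^sub>k"
  obtain i j where pij: "p = (i,j)" by force
  have h: "j < m" "i = j - Suc r" "A\<^sub>k $$ (i,j) \<noteq> 0" "\<forall>i'. (i',j) \<notin> P\<^sub>k"
    using p pij by (auto simp: new_pivots_iff)
  then have "i \<in> R" "j \<in> J k" using rca_Dk_support[of i j] by auto
  then show "p \<in> {p \<in> N. snd p \<in> J k}"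
    using p pij h same_pivots same_entries by (auto simp: new_pivots_iff)
next
  fix p assume p: "p \<in> {p \<in> N. snd p \<in> J k}"
  obtain i j where pij: "p = (i,j)" by force
  have "i \<in> R" using new_pivot_row_in_block r p pij by auto
  then show "p \<in> N\<^sub>k" using p pij same_pivots same_entries by (auto simp: new_pivots_iff)
qed

lemma rca_Suc_pivots_block: "snd (rca m Dk (Suc r)) = {p \<in> snd (rca m D (Suc r)). snd p \<in> J k}"
  using same_pivots block_new_pivots by (auto simp: rca_Suc_snd)

context
  assumes updated: "Suc r \<le> m - 2"
begin

lemma A_carrier: "A \<in> carrier_mat m m" and A\<^sub>k_carrier: "A\<^sub>k \<in> carrier_mat m m"
  by (rule rca_carrier[OF D_carrier], rule rca_carrier[OF Dk_carrier])

lemma N_finite: "finite N" "finite N\<^sub>k"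
  by (rule new_pivots_finite)+

lemma N_cols_bounded: "snd ` N \<subseteq> {..<m}" "snd ` N\<^sub>k \<subseteq> {..<m}"
  by (rule new_pivot_cols_bounded)+

lemma elim_coeff_col_in_block:
  assumes "q \<in> J k" "x < m" "elim_coeff A (snd ` N) (Suc r) x q \<noteq> 0"
  shows "x \<in> J k"
proof -
  have "q < m" using assms block_bounded by auto
  then have "grade x = grade q"
    by (rule elim_coeff_grade[OF A_carrier N_finite(1) N_cols_bounded(1)
          graded_rca[OF D_carrier D_graded] assms(2) _ assms(3), symmetric])
  also have "grade q = k" using grade_eq[OF block_indices(2) assms(1)] .
  finally show ?thesis using grade_mem[OF assms(2)] by simp
qed

lemma elim_coeff_block_eq:
  assumes qk: "q \<in> J k" and xm: "x < m"
  shows "elim_coeff A (snd ` N) (Suc r) x q = elim_coeff A\<^sub>k (snd ` N\<^sub>k) (Suc r) x q"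
proof (cases "x \<in> snd ` N \<and> x \<in> J k \<and> x < q")
  case True
  then have xN: "(x - Suc r, x) \<in> N" by (auto simp: new_pivots_iff new_pivot_cols_iff)
  then have "x \<in> snd ` N\<^sub>k" using block_new_pivots True by force
  moreover have "x - Suc r \<in> R" using new_pivot_row_in_block[OF xN r] True by simp
  ultimately show ?thesis using True qk same_entries by (simp add: elim_coeff_def)
next
  case False
  then have "elim_coeff A (snd ` N) (Suc r) x q = 0"
    using elim_coeff_col_in_block[OF qk xm] elim_coeff_nonzeroD by blast
  moreover have "elim_coeff A\<^sub>k (snd ` N\<^sub>k) (Suc r) x q = 0"
    using False block_new_pivots by (force simp: elim_coeff_def)
  ultimately show ?thesis by simp
qed

lemma col_reduce_block_eq:
  assumes iR: "i \<in> R" and "q \<in> J k"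
  shows "col_reduce m A N (Suc r) $$ (i,q) = col_reduce m A\<^sub>k N\<^sub>k (Suc r) $$ (i,q)"
  using assms(2)
proof (induction q rule: less_induct)
  case (less q)
  have im: "i < m" and qm: "q < m" using iR less.prems block_bounded by auto
  have "(\<Sum>x<m. col_reduce m A N (Suc r) $$ (i,x) * elim_coeff A (snd ` N) (Suc r) x q) =
        (\<Sum>x<m. col_reduce m A\<^sub>k N\<^sub>k (Suc r) $$ (i,x) * elim_coeff A\<^sub>k (snd ` N\<^sub>k) (Suc r) x q)"
  proof (rule sum.cong)
    fix x assume "x \<in> {..<m}"
    then have xm: "x < m" by simp
    show "col_reduce m A N (Suc r) $$ (i,x) * elim_coeff A (snd ` N) (Suc r) x q =
          col_reduce m A\<^sub>k N\<^sub>k (Suc r) $$ (i,x) * elim_coeff A\<^sub>k (snd ` N\<^sub>k) (Suc r) x q"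
      using less.IH[of x] elim_coeff_block_eq[OF less.prems xm]
        elim_coeff_col_in_block[OF less.prems xm] elim_coeff_nonzeroD
      by (metis mult_zero_right)
  qed simp
  then show ?case
    using index_col_reduce_expansion[where r = "Suc r", OF A_carrier N_finite(1) N_cols_bounded(1) im qm]
      index_col_reduce_expansion[where r = "Suc r", OF A\<^sub>k_carrier N_finite(2) N_cols_bounded(2) im qm]
      same_entries iR less.prems
    by simp
qed

text \<open>Row \<open>i\<close> of both updates equals row \<open>i\<close> of the column-reduced matrix, since \<open>i \<in> R\<close> is not
  the column of a new pivot.\<close>

lemma rca_update_block_eq:
  assumes iR: "i \<in> R" and jk: "j \<in> J k"
  shows "rca_update m A N (Suc r) $$ (i,j) = rca_update m A\<^sub>k N\<^sub>k (Suc r) $$ (i,j)"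
proof -
  have im: "i < m" and jm: "j < m" using iR jk block_bounded by auto
  have "i \<notin> snd ` N"
  proof
    assume "i \<in> snd ` N"
    then obtain i' where "(i',i) \<in> rca_pivots m D"
      using rca_pivots_mono[OF r, of m D] by (force simp: rca_pivots_def rca_Suc_snd)
    then show False using iR by (auto simp: pivot_cols_def)
  qed
  moreover have "i \<notin> snd ` N\<^sub>k" using block_new_pivots iR block_disjoint by auto
  ultimately show ?thesis
    using rca_update_index[where r = "Suc r", OF A_carrier N_finite(1) N_cols_bounded(1) im jm]
      rca_update_index[where r = "Suc r", OF A\<^sub>k_carrier N_finite(2) N_cols_bounded(2) im jm]
      col_reduce_block_eq[OF iR jk]
    by (simp add: elim_coeff_def)
qed

end

lemma rca_Suc_entries_block:
  "\<forall>i\<in>R. \<forall>j\<in>J k. fst (rca m D (Suc r)) $$ (i,j) = fst (rca m Dk (Suc r)) $$ (i,j)"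
  using same_entries rca_update_block_eq by (simp add: rca_Suc_fst)

end

lemma rca_block_simulation:
  "r \<le> m - 1 \<Longrightarrow> snd (rca m Dk r) = {p \<in> snd (rca m D r). snd p \<in> J k} \<and>
     (\<forall>i\<in>R. \<forall>j\<in>J k. fst (rca m D r) $$ (i,j) = fst (rca m Dk r) $$ (i,j))"
proof (induction r)
  case 0
  have "D $$ (i,j) = Dk $$ (i,j)" if "i \<in> R" "j \<in> J k" for i j
  proof -
    have "i < m" "j < m" using that block_bounded by auto
    then show ?thesis using that by (simp add: block_restrict_def)
  qed
  then show ?case by simp
next
  case (Suc r)
  then show ?case using rca_Suc_pivots_block rca_Suc_entries_block by simp
qed

lemma block_final_entries:
  assumes i: "i \<in> J (k-1)" and j: "j \<in> J k"
  shows "rca_final m D $$ (i,j) = rca_final m Dk $$ (i,j)"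
proof (cases "i \<in> pivot_cols (J (k-1))")
  case False
  then show ?thesis using rca_block_simulation[of "m - 1"] i j by (simp add: rca_final_def)
next
  case True
  have jm: "j < m" using j block_bounded by auto
  then have "rca_final m D $$ (i,j) = 0"
    using True rca_pivots_reduced unfolding pivots_reduced_def pivot_cols_def by blast
  moreover have "rca_final m Dk $$ (i,j) = 0"
    using True rca_Dk_support[of i j "m - 1"] i jm block_bounded by (auto simp: rca_final_def)
  ultimately show ?thesis by simp
qed

lemma block_pivots: "rca_pivots m Dk = {p \<in> rca_pivots m D. snd p \<in> J k}"
  using rca_block_simulation[of "m - 1"] by (simp add: rca_pivots_def)

end

lemma bs_cols_eq_pivot_cols: "k \<le> b \<Longrightarrow> bs_cols m D J k = pivot_cols (J k)"
proof (induction k)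
  case 0
  have "(i,x) \<notin> rca_pivots m D" if "x \<in> J 0" for i x
    using pivot_grade grade_eq[of 0 x] that by fastforce
  then show ?case by (auto simp: pivot_cols_def)
next
  case (Suc k)
  then have "bs_cols m D J (Suc k) = snd ` {p \<in> rca_pivots m D. snd p \<in> J (Suc k)}"
    using block_pivots[of "Suc k"] by simp
  then show ?case by (force simp: pivot_cols_def)
qed

lemma bs_block_eq:
  assumes "k \<in> {1..b}"
  shows "bs_block m D J k = block_restrict m D (J (k-1)) (pivot_cols (J (k-1))) (J k)"
proof -
  have "k - 1 \<le> b" using assms by auto
  then show ?thesis by (simp add: bs_block_def bs_cols_eq_pivot_cols)
qed

lemma bs_block_pivots:
  assumes "k \<in> {1..b}"
  shows "rca_pivots m (bs_block m D J k) = {p \<in> rca_pivots m D. snd p \<in> J k}"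
  unfolding bs_block_eq[OF assms] by (rule block_pivots[OF assms])

lemma bs_block_final_entries:
  assumes "k \<in> {1..b}" "i \<in> J (k-1)" "j \<in> J k"
  shows "rca_final m D $$ (i,j) = rca_final m (bs_block m D J k) $$ (i,j)"
  unfolding bs_block_eq[OF assms(1)] by (rule block_final_entries[OF assms])

lemma rca_pivots_block_union: "rca_pivots m D = (\<Union>k\<in>{1..b}. rca_pivots m (bs_block m D J k))"
proof (intro equalityI subsetI)
  fix p assume p: "p \<in> rca_pivots m D"
  obtain i j where pij: "p = (i,j)" by force
  have "j < m" "grade j = Suc (grade i)" using pivot_grade p pij by auto
  then have "grade j \<in> {1..b}" "j \<in> J (grade j)" using grade_mem[of j] by auto
  then show "p \<in> (\<Union>k\<in>{1..b}. rca_pivots m (bs_block m D J k))"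
    using bs_block_pivots p pij by auto
qed (use bs_block_pivots in auto)

end

theorem mainTheorem14:
  fixes D :: "'a::field mat" and m b :: nat and J :: "nat \<Rightarrow> nat set"
  assumes "m \<ge> 1"
    and "connection_matrix m b J D"
  shows "(\<forall>k\<in>{1..b}. \<forall>i\<in>J (k-1). \<forall>j\<in>J k.
            rca_final m D $$ (i,j) = rca_final m (bs_block m D J k) $$ (i,j))
         \<and> rca_pivots m D = (\<Union>k\<in>{1..b}. rca_pivots m (bs_block m D J k))"
proof -
  interpret connection_matrix_run m b J D using assms by unfold_locales
  show ?thesis using bs_block_final_entries rca_pivots_block_union by blast
qed

end
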